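(* Let $g:\mathbb{R}^m\to\mathbb{R}$ be a continuous convex function and $X\subset\mathbb{R}^m$ a closed convex set, and suppose the solution set $\mathbf{X}^*=\{x\in X: g(x)\le0\}$ is non-empty. Let $\alpha(t)\ge0$, $\beta(t)\ge0$ satisfy $\int_0^\infty\alpha(t)\,dt=\infty$ and $\int_0^\infty\beta(t)\,dt=\infty$. Then any solution $x(t)$ of $$\dot x(t)=-\alpha(t)\big[x(t)-P_X(x(t))\big]-\beta(t)\nabla g^+(x(t))$$ converges to a vector $x^*\in\mathbf{X}^*$.
   Context: $g^+(x)=\max[g(x),0]$; $\nabla g^+(x)$ denotes a subgradient of the convex function $g^+$ at $x$ (piecewise continuous in $x$); $P_X$ is the Euclidean projection onto $X$. *)

theory Defs
  imports "HOL-Analysis.Analysis"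
begin

definition pos_part_fun :: "('a \<Rightarrow> real) \<Rightarrow> 'a \<Rightarrow> real" where
  "pos_part_fun g x = max (g x) 0"

definition is_subgradient :: "('a::real_inner \<Rightarrow> real) \<Rightarrow> 'a \<Rightarrow> 'a \<Rightarrow> bool" where
  "is_subgradient h x v \<longleftrightarrow> (\<forall>y. h y \<ge> h x + v \<bullet> (y - x))"

end

theory Submission
  imports Defs
begin

text \<open>For every feasible \<open>z\<close>, the projection and subgradient inequalities bound the pairing
  of the velocity with \<open>x - z\<close> by minus the dissipation \<open>\<alpha> d\<^sub>X(x)\<^sup>2 + \<beta> g\<^sup>+(x)\<close>.
  Hence \<open>|x(t) - z|\<close> is non-increasing and the total dissipation is finite. Because
  \<open>\<integral>\<alpha> = \<integral>\<beta> = \<infinity>\<close>, the trajectory can stay neither away from \<open>X\<close> nor in a region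
  \<open>g\<^sup>+ \<ge> c\<close> forever, and an excursion between two distance levels inside that region costs a
  fixed amount of dissipation. So \<open>x(t)\<close> approaches the solution set at arbitrarily late
  times; a cluster point \<open>p\<close> is feasible, and monotonicity of \<open>|x(t) - p|\<close> gives \<open>x(t) \<rightarrow> p\<close>.\<close>

lemma increment_le_integral_if_locally:
  fixes F k :: "real \<Rightarrow> real"
  assumes ab: "a \<le> b"
    and F_cont: "continuous_on {a..b} F"
    and k_int: "k integrable_on {a..b}"
    and local_bound: "\<And>r. a \<le> r \<Longrightarrow> r < b \<Longrightarrow>
      \<exists>\<eta>>0. \<forall>u. r < u \<and> u < r + \<eta> \<and> u \<le> b \<longrightarrow> F u - F r \<le> integral {r..u} k"
  shows "F b - F a \<le> integral {a..b} k"
proof -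
  define \<Phi> where "\<Phi> u = F u - F a - integral {a..u} k" for u
  define S where "S = {a..b} \<inter> \<Phi> -` {..0}"
  have "continuous_on {a..b} \<Phi>"
    unfolding \<Phi>_def using F_cont indefinite_integral_continuous_1[OF k_int] by (intro continuous_intros)
  then have "closed S"
    unfolding S_def by (rule continuous_closed_preimage) auto
  moreover have "a \<in> S" using ab by (simp add: S_def \<Phi>_def)
  moreover have "bdd_above S" by (auto simp: S_def bdd_above_def)
  ultimately have m: "Sup S \<in> S" by (intro closed_contains_Sup) auto
  define m where "m = Sup S"
  have "m = b"
  proof (rule ccontr)
    assume "m \<noteq> b"
    then have am: "a \<le> m" "m < b" using m by (auto simp: S_def \<Phi>_def m_def)
    then obtain \<eta> where \<eta>: "\<eta> > 0" "\<forall>u. m < u \<and> u < m + \<eta> \<and> u \<le> b \<longrightarrow> F u - F m \<le> integral {m..u} k"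
      using local_bound by blast
    define u where "u = min (m + \<eta>/2) b"
    have mu: "m < u" "u \<le> b" using am \<eta> by (auto simp: u_def)
    have "k integrable_on {a..u}"
      using integrable_subinterval_real[OF k_int] mu by auto
    then have "integral {a..u} k = integral {a..m} k + integral {m..u} k"
      using Henstock_Kurzweil_Integration.integral_combine[of a m u k] am mu by simp
    moreover have "F u - F m \<le> integral {m..u} k" using \<eta> mu by (auto simp: u_def)
    ultimately have "u \<in> S" using m mu am by (auto simp: S_def \<Phi>_def m_def)
    then have "u \<le> m" unfolding m_def using \<open>bdd_above S\<close> by (rule cSup_upper)
    then show False using mu by simp
  qed
  then show ?thesis using m by (simp add: S_def \<Phi>_def m_def)
qed

lemma continuous_crossing_interval:
  fixes \<phi> :: "real \<Rightarrow> real"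
  assumes ab: "a \<le> b" and cont: "continuous_on {a..b} \<phi>"
    and "\<phi> a \<le> l" "l \<le> u" "u \<le> \<phi> b"
  obtains a' b' where "a \<le> a'" "a' \<le> b'" "b' \<le> b" "\<phi> a' = l" "\<phi> b' = u"
    "\<And>t. a' \<le> t \<Longrightarrow> t \<le> b' \<Longrightarrow> l \<le> \<phi> t \<and> \<phi> t \<le> u"
proof -
  define A where "A = {t \<in> {a..b}. \<phi> t = l}"
  have "A \<noteq> {}" using IVT'[of \<phi> a l b] assms by (auto simp: A_def)
  moreover have "closed A" unfolding A_def using cont by (intro continuous_closed_preimage_constant) auto
  moreover have "bdd_above A" by (auto simp: A_def bdd_above_def)
  ultimately have "Sup A \<in> A" by (intro closed_contains_Sup)
  define a' where "a' = Sup A"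
  have a': "a \<le> a'" "a' \<le> b" "\<phi> a' = l" using \<open>Sup A \<in> A\<close> by (auto simp: A_def a'_def)
  have cont': "continuous_on {a'..b} \<phi>" using a' by (intro continuous_on_subset[OF cont]) auto
  define B where "B = {t \<in> {a'..b}. \<phi> t = u}"
  have "B \<noteq> {}" using IVT'[of \<phi> a' u b] a' assms cont' by (auto simp: B_def)
  moreover have "closed B" unfolding B_def using cont' by (intro continuous_closed_preimage_constant) auto
  moreover have "bdd_below B" by (auto simp: B_def bdd_below_def)
  ultimately have "Inf B \<in> B" by (intro closed_contains_Inf)
  define b' where "b' = Inf B"
  have b': "a' \<le> b'" "b' \<le> b" "\<phi> b' = u" using \<open>Inf B \<in> B\<close> by (auto simp: B_def b'_def)
  have between: "l \<le> \<phi> t \<and> \<phi> t \<le> u" if t: "a' \<le> t" "t \<le> b'" for t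
  proof
    show "l \<le> \<phi> t"
    proof (rule ccontr)
      assume "\<not> l \<le> \<phi> t"
      then obtain s where s: "t \<le> s" "s \<le> b" "\<phi> s = l"
        using IVT'[of \<phi> t l b] assms t a' b' continuous_on_subset[OF cont] by fastforce
      then have "s \<le> a'" unfolding a'_def using \<open>bdd_above A\<close> t a' by (intro cSup_upper) (auto simp: A_def)
      then have "s = t" using s t by linarith
      then show False using s \<open>\<not> l \<le> \<phi> t\<close> by simp
    qed
    show "\<phi> t \<le> u"
    proof (rule ccontr)
      assume "\<not> \<phi> t \<le> u"
      then obtain s where s: "a' \<le> s" "s \<le> t" "\<phi> s = u"
        using IVT'[of \<phi> a' u t] assms t a' b' continuous_on_subset[OF cont] by fastforce
      then have "b' \<le> s" unfolding b'_def using \<open>bdd_below B\<close> t b' by (intro cInf_lower) (auto simp: B_def)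
      then have "s = t" using s t by linarith
      then show False using s \<open>\<not> \<phi> t \<le> u\<close> by simp
    qed
  qed
  show ?thesis using that a' b' between by blast
qed

lemma integral_tail_unbounded:
  fixes w :: "real \<Rightarrow> real"
  assumes div: "filterlim (\<lambda>t. integral {0..t} w) at_top at_top"
    and int: "\<And>t. 0 \<le> t \<Longrightarrow> w integrable_on {0..t}"
    and "0 \<le> T"
  obtains b where "T \<le> b" "Z \<le> integral {T..b} w"
proof -
  obtain N where N: "\<And>t. N \<le> t \<Longrightarrow> Z + integral {0..T} w \<le> integral {0..t} w"
    using div unfolding filterlim_at_top eventually_at_top_linorder by blast
  define b where "b = max N T"
  have "integral {0..b} w = integral {0..T} w + integral {T..b} w"
    using Henstock_Kurzweil_Integration.integral_combine[of 0 T b w] int[of b] \<open>0 \<le> T\<close>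
    by (simp add: b_def)
  then show ?thesis using N[of b] by (intro that[of b]) (auto simp: b_def)
qed

lemma dist_closest_point_eq_infdist:
  fixes S :: "'a::euclidean_space set"
  assumes "closed S" "S \<noteq> {}"
  shows "dist y (closest_point S y) = infdist y S"
proof (rule antisym)
  obtain z where "z \<in> S" "infdist y S = dist y z"
    using infdist_attains_inf[OF assms] by blast
  then show "dist y (closest_point S y) \<le> infdist y S"
    using closest_point_le[OF \<open>closed S\<close>] by simp
  show "infdist y S \<le> dist y (closest_point S y)"
    using infdist_le closest_point_in_set[OF assms] by blast
qed

lemma bounded_subgradients:
  fixes h :: "'a::euclidean_space \<Rightarrow> real"
  assumes "continuous_on UNIV h" and "\<And>y. is_subgradient h y (G y)" and "bounded B"
  shows "bounded (G ` B)"
proof -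
  obtain R where R: "\<And>y. y \<in> B \<Longrightarrow> norm y \<le> R" using \<open>bounded B\<close> bounded_iff by blast
  have "compact (h ` cball 0 (R + 1))"
    by (rule compact_continuous_image[OF continuous_on_subset[OF assms(1)]]) auto
  then obtain M where "\<forall>v \<in> h ` cball 0 (R + 1). norm v \<le> M"
    using compact_imp_bounded bounded_iff by blast
  then have M: "\<bar>h w\<bar> \<le> M" if "norm w \<le> R + 1" for w
    using that by simp
  have "norm (G y) \<le> 2 * M" if "y \<in> B" for y
  proof (cases "G y = 0")
    case True then show ?thesis using M[of y] R[OF that] by force
  next
    case False
    define w where "w = y + (1 / norm (G y)) *\<^sub>R G y"
    have "norm w \<le> norm y + norm ((1 / norm (G y)) *\<^sub>R G y)"
      unfolding w_def by (rule norm_triangle_ineq)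
    also have "\<dots> = norm y + 1" using False by simp
    finally have "norm w \<le> norm y + 1" .
    then have "norm w \<le> R + 1" using R[OF that] by linarith
    moreover have "h w \<ge> h y + G y \<bullet> (w - y)"
      using assms(2) by (simp add: is_subgradient_def)
    moreover have "G y \<bullet> (w - y) = (G y \<bullet> G y) / norm (G y)"
      by (simp add: w_def)
    moreover have "(G y \<bullet> G y) / norm (G y) = norm (G y)"
      using False by (simp add: dot_square_norm power2_eq_square)
    moreover have "norm y \<le> R + 1" using R[OF that] by linarith
    ultimately show ?thesis using M[of w] M[of y] by linarith
  qed
  then show ?thesis by (auto simp: bounded_iff)
qed

lemma tendsto_of_antimono_dist:
  fixes x :: "real \<Rightarrow> 'a::metric_space"
  assumes antimono: "\<And>s t. T \<le> s \<Longrightarrow> s \<le> t \<Longrightarrow> dist (x t) p \<le> dist (x s) p"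
    and late: "\<And>n. T \<le> \<tau> n" and lim: "(\<lambda>n. x (\<tau> n)) \<longlonglongrightarrow> p"
  shows "(x \<longlongrightarrow> p) at_top"
proof (rule tendstoI)
  fix \<epsilon> :: real assume "\<epsilon> > 0"
  then have "eventually (\<lambda>n. dist (x (\<tau> n)) p < \<epsilon>) sequentially"
    using lim by (rule tendstoD[rotated])
  then obtain n where n: "dist (x (\<tau> n)) p < \<epsilon>"
    by (auto simp: eventually_sequentially)
  show "eventually (\<lambda>t. dist (x t) p < \<epsilon>) at_top"
    unfolding eventually_at_top_linorder
    using antimono[OF late] n by (intro exI[of _ "\<tau> n"]) (auto intro: le_less_trans)
qed

locale projected_subgradient_flow =
  fixes g :: "'a::euclidean_space \<Rightarrow> real"
    and X :: "'a set"
    and \<alpha> \<beta> :: "real \<Rightarrow> real"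
    and G :: "'a \<Rightarrow> 'a"
    and x :: "real \<Rightarrow> 'a"
  assumes g_cont: "continuous_on UNIV g"
    and X_closed: "closed X"
    and X_convex: "convex X"
    and sol_nonempty: "{y \<in> X. g y \<le> 0} \<noteq> {}"
    and G_subgrad: "\<And>y. is_subgradient (pos_part_fun g) y (G y)"
    and \<alpha>_nonneg: "\<And>t. t \<ge> 0 \<Longrightarrow> \<alpha> t \<ge> 0"
    and \<beta>_nonneg: "\<And>t. t \<ge> 0 \<Longrightarrow> \<beta> t \<ge> 0"
    and \<alpha>_loc_int: "\<And>T. T \<ge> 0 \<Longrightarrow> \<alpha> integrable_on {0..T}"
    and \<beta>_loc_int: "\<And>T. T \<ge> 0 \<Longrightarrow> \<beta> integrable_on {0..T}"
    and \<alpha>_div: "filterlim (\<lambda>T. integral {0..T} \<alpha>) at_top at_top"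
    and \<beta>_div: "filterlim (\<lambda>T. integral {0..T} \<beta>) at_top at_top"
    and x_sol: "\<And>t. t \<ge> 0 \<Longrightarrow>
        (\<lambda>s. - (\<alpha> s *\<^sub>R (x s - closest_point X (x s))) - \<beta> s *\<^sub>R G (x s))
          absolutely_integrable_on {0..t} \<and>
        ((\<lambda>s. - (\<alpha> s *\<^sub>R (x s - closest_point X (x s))) - \<beta> s *\<^sub>R G (x s))
          has_integral (x t - x 0)) {0..t}"
begin

definition velocity :: "real \<Rightarrow> 'a" where
  "velocity s = - (\<alpha> s *\<^sub>R (x s - closest_point X (x s))) - \<beta> s *\<^sub>R G (x s)"

definition dissipation :: "real \<Rightarrow> real" where
  "dissipation s = \<alpha> s * (infdist (x s) X)\<^sup>2 + \<beta> s * pos_part_fun g (x s)"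

lemma X_nonempty: "X \<noteq> {}"
  using sol_nonempty by auto

lemma velocity_absolutely_integrable:
  assumes "0 \<le> a" "a \<le> b"
  shows "velocity absolutely_integrable_on {a..b}"
proof (rule absolutely_integrable_on_subinterval)
  show "velocity absolutely_integrable_on {0..b}"
    unfolding velocity_def[abs_def] using x_sol assms by simp
qed (use assms in auto)

lemma velocity_integrable: "0 \<le> a \<Longrightarrow> a \<le> b \<Longrightarrow> velocity integrable_on {a..b}"
  using velocity_absolutely_integrable set_lebesgue_integral_eq_integral(1) by blast

lemma norm_velocity_integrable:
  "0 \<le> a \<Longrightarrow> a \<le> b \<Longrightarrow> (\<lambda>s. norm (velocity s)) integrable_on {a..b}"
  using velocity_absolutely_integrable absolutely_integrable_on_def by blast

lemma trajectory_increment: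
  assumes "0 \<le> a" "a \<le> b"
  shows "(velocity has_integral (x b - x a)) {a..b}"
proof -
  have from_0: "integral {0..t} velocity = x t - x 0" if "0 \<le> t" for t
    using x_sol[OF that] by (simp add: velocity_def[abs_def] integral_unique)
  have "integral {0..a} velocity + integral {a..b} velocity = integral {0..b} velocity"
    using Henstock_Kurzweil_Integration.integral_combine[of 0 a b velocity] velocity_integrable[of 0 b] assms
    by simp
  then have "integral {a..b} velocity = x b - x a"
    using from_0[of a] from_0[of b] assms by (simp add: algebra_simps)
  then show ?thesis using velocity_integrable[OF assms] by (simp add: has_integral_integral)
qed

lemma continuous_on_trajectory:
  assumes "0 \<le> a" "a \<le> b"
  shows "continuous_on {a..b} x"
proof -
  have "continuous_on {0..b} (\<lambda>t. x 0 + integral {0..t} velocity)"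
    using indefinite_integral_continuous_1[OF velocity_integrable[of 0 b]] assms
    by (intro continuous_intros) auto
  moreover have "x 0 + integral {0..t} velocity = x t" if "t \<in> {0..b}" for t
    using integral_unique[OF trajectory_increment[of 0 t]] that by simp
  ultimately have "continuous_on {0..b} x" using continuous_on_eq by blast
  then show ?thesis by (rule continuous_on_subset) (use assms in auto)
qed

lemma dist_trajectory_le:
  assumes "0 \<le> a" "a \<le> b"
  shows "dist (x b) (x a) \<le> integral {a..b} (\<lambda>s. norm (velocity s))"
  using integral_norm_bound_integral[OF velocity_integrable[OF assms] norm_velocity_integrable[OF assms]]
    integral_unique[OF trajectory_increment[OF assms]]
  by (simp add: dist_norm)

lemma continuous_pos_part: "continuous_on UNIV (pos_part_fun g)"
  unfolding pos_part_fun_def[abs_def] using g_cont by (intro continuous_intros)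

lemma pos_part_nonneg: "0 \<le> pos_part_fun g y"
  by (simp add: pos_part_fun_def)

lemma weighted_integrable:
  fixes w :: "real \<Rightarrow> real" and \<phi> :: "'a \<Rightarrow> real"
  assumes ab: "0 \<le> a" "a \<le> b" and \<phi>: "continuous_on UNIV \<phi>"
    and w: "\<And>T. 0 \<le> T \<Longrightarrow> w integrable_on {0..T}" and w_nonneg: "\<And>s. 0 \<le> s \<Longrightarrow> 0 \<le> w s"
  shows "(\<lambda>s. w s * \<phi> (x s)) integrable_on {a..b}"
proof -
  have "w integrable_on {0..b}" using w ab by simp
  then have "w integrable_on {a..b}" using integrable_subinterval_real[of w 0 b a b] ab by simp
  then have "w absolutely_integrable_on {a..b}"
    using w_nonneg ab by (intro nonnegative_absolutely_integrable_1) auto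
  moreover have "continuous_on {a..b} (\<lambda>s. \<phi> (x s))"
    using continuous_on_trajectory[OF ab] by (intro continuous_on_compose2[OF \<phi>]) auto
  ultimately have "(\<lambda>s. \<phi> (x s) * w s) absolutely_integrable_on {a..b}"
    by (intro absolutely_integrable_bounded_measurable_product_real
        continuous_imp_measurable_on_sets_lebesgue compact_imp_bounded compact_continuous_image) auto
  then show ?thesis
    using set_lebesgue_integral_eq_integral(1) by (simp add: mult.commute)
qed

lemma dissipation_integrable:
  assumes "0 \<le> a" "a \<le> b"
  shows "dissipation integrable_on {a..b}"
proof -
  have "continuous_on UNIV (\<lambda>y. (infdist y X)\<^sup>2)" by (intro continuous_intros)
  then show ?thesis
    unfolding dissipation_def[abs_def]
    using weighted_integrable[OF assms _ \<alpha>_loc_int \<alpha>_nonneg]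
      weighted_integrable[OF assms continuous_pos_part \<beta>_loc_int \<beta>_nonneg]
    by (intro integrable_add) auto
qed

lemma dissipation_nonneg: "0 \<le> s \<Longrightarrow> 0 \<le> dissipation s"
  unfolding dissipation_def using \<alpha>_nonneg \<beta>_nonneg pos_part_nonneg by simp

lemma norm_velocity_le:
  assumes "0 \<le> s"
  shows "norm (velocity s) \<le> \<alpha> s * infdist (x s) X + \<beta> s * norm (G (x s))"
proof -
  have "norm (velocity s) \<le> norm (\<alpha> s *\<^sub>R (x s - closest_point X (x s))) + norm (\<beta> s *\<^sub>R G (x s))"
    unfolding velocity_def by (rule order_trans[OF norm_triangle_ineq4]) simp
  then show ?thesis
    using \<alpha>_nonneg[OF assms] \<beta>_nonneg[OF assms]
      dist_closest_point_eq_infdist[OF X_closed X_nonempty, of "x s"]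
    by (simp add: dist_norm)
qed

lemma velocity_inner_le:
  assumes s: "0 \<le> s" and z: "z \<in> X" "g z \<le> 0"
  shows "velocity s \<bullet> (x s - z) \<le> - dissipation s"
proof -
  let ?y = "x s" let ?p = "closest_point X (x s)"
  have "(?y - ?p) \<bullet> (?y - z) = (?y - ?p) \<bullet> (?y - ?p) - (?y - ?p) \<bullet> (z - ?p)"
    by (simp add: inner_diff_right)
  moreover have "(infdist ?y X)\<^sup>2 = (?y - ?p) \<bullet> (?y - ?p)"
    using dist_closest_point_eq_infdist[OF X_closed X_nonempty, of ?y]
    by (simp add: dist_norm flip: power2_norm_eq_inner)
  ultimately have proj: "(infdist ?y X)\<^sup>2 \<le> (?y - ?p) \<bullet> (?y - z)"
    using closest_point_dot[OF X_convex X_closed z(1), of ?y] by linarith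
  have "pos_part_fun g z + G ?y \<bullet> (?y - z) \<ge> pos_part_fun g ?y"
    using G_subgrad[of ?y] unfolding is_subgradient_def by (smt (verit) inner_diff_right)
  then have subgrad: "pos_part_fun g ?y \<le> G ?y \<bullet> (?y - z)"
    using z by (simp add: pos_part_fun_def)
  have "velocity s \<bullet> (?y - z) = - (\<alpha> s * ((?y - ?p) \<bullet> (?y - z))) - \<beta> s * (G ?y \<bullet> (?y - z))"
    unfolding velocity_def by (simp add: inner_diff_left)
  also have "\<dots> \<le> - dissipation s"
    unfolding dissipation_def
    using mult_left_mono[OF proj \<alpha>_nonneg[OF s]] mult_left_mono[OF subgrad \<beta>_nonneg[OF s]]
    by linarith
  finally show ?thesis .
qed

text \<open>The trajectory is only known to be an indefinite integral, so instead of differentiating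
  \<open>|x(t) - z|\<^sup>2\<close> we bound its increments over short intervals, with an error proportional to
  the path length that is then made arbitrarily small.\<close>

lemma energy_increment_le:
  assumes z: "z \<in> X" "g z \<le> 0" and r: "0 \<le> r" and ru: "r \<le> u"
    and near: "\<And>s. s \<in> {r..u} \<Longrightarrow> norm (x s - x r) \<le> \<epsilon>"
  shows "(norm (x u - z))\<^sup>2 - (norm (x r - z))\<^sup>2
    \<le> integral {r..u} (\<lambda>s. 3 * \<epsilon> * norm (velocity s) - 2 * dissipation s)"
proof -
  define H where "H = integral {r..u} dissipation"
  define A where "A = integral {r..u} (\<lambda>s. norm (velocity s))"
  have lhs: "((\<lambda>s. velocity s \<bullet> (x r - z)) has_integral ((x u - x r) \<bullet> (x r - z))) {r..u}"
    using has_integral_linear[OF trajectory_increment[OF r ru] bounded_linear_inner_left[of "x r - z"]]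
    by (simp add: o_def)
  have rhs: "((\<lambda>s. \<epsilon> * norm (velocity s) - dissipation s) has_integral (\<epsilon> * A - H)) {r..u}"
    unfolding H_def A_def
    using dissipation_integrable[OF r ru] norm_velocity_integrable[OF r ru]
    by (intro has_integral_diff has_integral_mult_right) (auto intro: integrable_integral)
  have "velocity s \<bullet> (x r - z) \<le> \<epsilon> * norm (velocity s) - dissipation s" if s: "s \<in> {r..u}" for s
  proof -
    have "velocity s \<bullet> (x r - x s) \<le> norm (velocity s) * norm (x r - x s)"
      by (rule order_trans[OF abs_ge_self Cauchy_Schwarz_ineq2])
    also have "\<dots> \<le> norm (velocity s) * \<epsilon>"
      using near[OF s] by (intro mult_left_mono) (auto simp: norm_minus_commute)
    finally show ?thesis
      using velocity_inner_le[OF _ z, of s] s r by (simp add: inner_diff_right mult.commute)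
  qed
  then have cross: "(x u - x r) \<bullet> (x r - z) \<le> \<epsilon> * A - H"
    using has_integral_le[OF lhs rhs] by blast
  have length: "norm (x u - x r) \<le> A"
    using dist_trajectory_le[OF r ru] by (simp add: A_def dist_norm)
  have square: "(norm (x u - x r))\<^sup>2 \<le> \<epsilon> * A"
    using mult_mono[OF near[of u] length] near[of r] ru by (simp add: power2_eq_square)
  have "(norm (p + q))\<^sup>2 = (norm q)\<^sup>2 + 2 * (p \<bullet> q) + (norm p)\<^sup>2" for p q :: 'a
    by (simp add: power2_norm_eq_inner inner_add_left inner_add_right inner_commute)
  from this[of "x u - x r" "x r - z"] have "(norm (x u - z))\<^sup>2
      = (norm (x r - z))\<^sup>2 + 2 * ((x u - x r) \<bullet> (x r - z)) + (norm (x u - x r))\<^sup>2"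
    by simp
  moreover have "integral {r..u} (\<lambda>s. 3 * \<epsilon> * norm (velocity s) - 2 * dissipation s) = 3 * \<epsilon> * A - 2 * H"
    unfolding H_def A_def
    using dissipation_integrable[OF r ru] norm_velocity_integrable[OF r ru]
    by (simp add: integral_diff integrable_on_mult_right)
  ultimately show ?thesis using cross square by linarith
qed

lemma energy_local_step:
  assumes z: "z \<in> X" "g z \<le> 0" and r: "0 \<le> r" and \<epsilon>: "0 < \<epsilon>"
  shows "\<exists>\<eta>>0. \<forall>u. r < u \<and> u < r + \<eta> \<longrightarrow>
    (norm (x u - z))\<^sup>2 - (norm (x r - z))\<^sup>2
      \<le> integral {r..u} (\<lambda>s. 3 * \<epsilon> * norm (velocity s) - 2 * dissipation s)"
proof -
  obtain \<eta> where \<eta>: "\<eta> > 0" "\<And>u. u \<in> {r..r+1} \<Longrightarrow> dist u r < \<eta> \<Longrightarrow> dist (x u) (x r) < \<epsilon>"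
    using continuous_on_trajectory[OF r, of "r + 1"] \<epsilon> r
    unfolding continuous_on_iff by (metis atLeastAtMost_iff less_add_one less_eq_real_def order_refl)
  have "(norm (x u - z))\<^sup>2 - (norm (x r - z))\<^sup>2
      \<le> integral {r..u} (\<lambda>s. 3 * \<epsilon> * norm (velocity s) - 2 * dissipation s)"
    if u: "r < u" "u < r + min \<eta> 1" for u
  proof (rule energy_increment_le[OF z r])
    show "r \<le> u" using u by simp
    fix s assume "s \<in> {r..u}"
    then have "s \<in> {r..r+1}" "dist s r < \<eta>" using u by (auto simp: dist_real_def)
    then have "dist (x s) (x r) < \<epsilon>" by (rule \<eta>(2))
    then show "norm (x s - x r) \<le> \<epsilon>" by (simp add: dist_norm)
  qed
  then show ?thesis using \<eta>(1) by (intro exI[of _ "min \<eta> 1"]) auto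
qed

lemma energy_estimate:
  assumes z: "z \<in> X" "g z \<le> 0" and ab: "0 \<le> a" "a \<le> b"
  shows "(norm (x b - z))\<^sup>2 + 2 * integral {a..b} dissipation \<le> (norm (x a - z))\<^sup>2"
proof (rule field_le_epsilon)
  fix e :: real assume "0 < e"
  define A where "A = integral {a..b} (\<lambda>s. norm (velocity s))"
  have "0 \<le> A" unfolding A_def using norm_velocity_integrable[OF ab] by (simp add: integral_nonneg)
  define \<epsilon> where "\<epsilon> = e / (3 * (A + 1))"
  have "0 < \<epsilon>" using \<open>0 < e\<close> \<open>0 \<le> A\<close> by (simp add: \<epsilon>_def)
  have "(norm (x b - z))\<^sup>2 - (norm (x a - z))\<^sup>2
      \<le> integral {a..b} (\<lambda>s. 3 * \<epsilon> * norm (velocity s) - 2 * dissipation s)"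
  proof (rule increment_le_integral_if_locally[OF ab(2)])
    show "continuous_on {a..b} (\<lambda>t. (norm (x t - z))\<^sup>2)"
      using continuous_on_trajectory[OF ab] by (intro continuous_intros)
    show "(\<lambda>s. 3 * \<epsilon> * norm (velocity s) - 2 * dissipation s) integrable_on {a..b}"
      using norm_velocity_integrable[OF ab] dissipation_integrable[OF ab]
      by (intro integrable_diff integrable_on_mult_right)
    fix r assume "a \<le> r" "r < b"
    then show "\<exists>\<eta>>0. \<forall>u. r < u \<and> u < r + \<eta> \<and> u \<le> b \<longrightarrow> (norm (x u - z))\<^sup>2 - (norm (x r - z))\<^sup>2
        \<le> integral {r..u} (\<lambda>s. 3 * \<epsilon> * norm (velocity s) - 2 * dissipation s)"
      using energy_local_step[OF z _ \<open>0 < \<epsilon>\<close>, of r] ab by fastforce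
  qed
  also have "\<dots> = 3 * \<epsilon> * A - 2 * integral {a..b} dissipation"
    unfolding A_def using norm_velocity_integrable[OF ab] dissipation_integrable[OF ab]
    by (simp add: integral_diff integrable_on_mult_right)
  also have "3 * \<epsilon> * A \<le> e"
    using \<open>0 < e\<close> \<open>0 \<le> A\<close> by (simp add: \<epsilon>_def field_simps)
  finally show "(norm (x b - z))\<^sup>2 + 2 * integral {a..b} dissipation \<le> (norm (x a - z))\<^sup>2 + e"
    by simp
qed

lemma dist_solution_antimono:
  assumes "z \<in> X" "g z \<le> 0" "0 \<le> a" "a \<le> b"
  shows "dist (x b) z \<le> dist (x a) z"
proof -
  have "0 \<le> integral {a..b} dissipation"
    using dissipation_integrable[OF assms(3,4)] dissipation_nonneg assms(3) by (intro integral_nonneg) auto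
  then have "(norm (x b - z))\<^sup>2 \<le> (norm (x a - z))\<^sup>2" using energy_estimate[OF assms] by linarith
  then show ?thesis by (simp add: dist_norm power_mono_iff)
qed

lemma trajectory_bounded: "bounded (x ` {0..})"
proof -
  obtain z where z: "z \<in> X" "g z \<le> 0" using sol_nonempty by auto
  have "x ` {0..} \<subseteq> cball z (dist (x 0) z)"
    using dist_solution_antimono[OF z order_refl] by (auto simp: dist_commute)
  then show ?thesis using bounded_cball bounded_subset by blast
qed

lemma subgradient_bounded_along_trajectory:
  obtains L where "\<And>t. 0 \<le> t \<Longrightarrow> norm (G (x t)) \<le> L"
proof -
  have "bounded (G ` x ` {0..})"
    by (rule bounded_subgradients[OF continuous_pos_part G_subgrad trajectory_bounded])
  then show ?thesis using that by (auto simp: bounded_iff)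
qed

lemma dissipation_tail_small:
  assumes "0 < \<gamma>"
  obtains T where "0 \<le> T" "\<And>a b. T \<le> a \<Longrightarrow> a \<le> b \<Longrightarrow> integral {a..b} dissipation < \<gamma>"
proof -
  obtain z where z: "z \<in> X" "g z \<le> 0" using sol_nonempty by auto
  define \<phi> where "\<phi> t = (norm (x t - z))\<^sup>2" for t
  have "bdd_below (\<phi> ` {0..})"
    unfolding \<phi>_def bdd_below_def by (intro exI[of _ 0]) auto
  then obtain T where T: "0 \<le> T" "\<phi> T < (INF t\<in>{0..}. \<phi> t) + 2 * \<gamma>"
    using cInf_less_iff[of "\<phi> ` {0..}" "(INF t\<in>{0..}. \<phi> t) + 2 * \<gamma>"] \<open>0 < \<gamma>\<close> by auto
  have "integral {a..b} dissipation < \<gamma>" if "T \<le> a" "a \<le> b" for a b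
  proof -
    have "2 * integral {a..b} dissipation \<le> \<phi> a - \<phi> b"
      using energy_estimate[OF z, of a b] that T by (simp add: \<phi>_def)
    moreover have "\<phi> a \<le> \<phi> T"
      using dist_solution_antimono[OF z, of T a] that T by (simp add: \<phi>_def dist_norm power_mono)
    moreover have "(INF t\<in>{0..}. \<phi> t) \<le> \<phi> b"
      using \<open>bdd_below (\<phi> ` {0..})\<close> that T by (intro cINF_lower) auto
    ultimately show ?thesis using T by linarith
  qed
  then show ?thesis using that T by blast
qed

lemma no_diverging_minorant:
  fixes w :: "real \<Rightarrow> real"
  assumes div: "filterlim (\<lambda>t. integral {0..t} w) at_top at_top"
    and w_int: "\<And>t. 0 \<le> t \<Longrightarrow> w integrable_on {0..t}"
    and "0 < c" "0 \<le> T" and minorant: "\<And>s. T \<le> s \<Longrightarrow> c * w s \<le> dissipation s"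
  shows False
proof -
  obtain T0 where T0: "0 \<le> T0" "\<And>a b. T0 \<le> a \<Longrightarrow> a \<le> b \<Longrightarrow> integral {a..b} dissipation < 1"
    using dissipation_tail_small[of 1] by auto
  define T' where "T' = max T T0"
  have "0 \<le> T'" using \<open>0 \<le> T\<close> by (simp add: T'_def)
  then obtain b where b: "T' \<le> b" "1 / c \<le> integral {T'..b} w"
    using integral_tail_unbounded[OF div w_int] by metis
  have "w integrable_on {T'..b}"
    using integrable_subinterval_real[OF w_int[of b], of T' b] b \<open>0 \<le> T\<close> by (auto simp: T'_def)
  then have "integral {T'..b} (\<lambda>s. c * w s) \<le> integral {T'..b} dissipation"
    using minorant dissipation_integrable[OF \<open>0 \<le> T'\<close> b(1)]
    by (intro integral_le integrable_on_mult_right) (auto simp: T'_def)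
  then have "c * integral {T'..b} w \<le> integral {T'..b} dissipation" by simp
  moreover have "1 \<le> c * integral {T'..b} w"
    using b \<open>0 < c\<close> by (simp add: field_simps)
  ultimately show False using T0(2)[of T' b] b by (simp add: T'_def)
qed

lemma norm_velocity_le_dissipation:
  assumes s: "0 \<le> s" and \<delta>: "0 < \<delta>" "\<delta> \<le> infdist (x s) X"
    and c: "0 < c" "c \<le> pos_part_fun g (x s)" and L: "norm (G (x s)) \<le> L"
  shows "norm (velocity s) \<le> (1/\<delta> + L/c) * dissipation s"
proof -
  define d where "d = infdist (x s) X"
  have "d \<le> d\<^sup>2 / \<delta>"
    using \<delta> mult_right_mono[OF \<delta>(2), of d] by (simp add: d_def field_simps power2_eq_square)
  then have "\<alpha> s * d \<le> \<alpha> s * (d\<^sup>2 / \<delta>)"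
    using \<alpha>_nonneg[OF s] by (rule mult_left_mono)
  then have dist_part: "\<alpha> s * d \<le> 1/\<delta> * (\<alpha> s * d\<^sup>2)" by simp
  have "L \<le> L/c * pos_part_fun g (x s)"
    using mult_left_mono[OF c(2), of "L/c"] c L norm_ge_zero[of "G (x s)"] by simp
  then have "norm (G (x s)) \<le> L/c * pos_part_fun g (x s)" using L by linarith
  then have "\<beta> s * norm (G (x s)) \<le> \<beta> s * (L/c * pos_part_fun g (x s))"
    using \<beta>_nonneg[OF s] by (rule mult_left_mono)
  then have subgrad_part: "\<beta> s * norm (G (x s)) \<le> L/c * (\<beta> s * pos_part_fun g (x s))"
    by (simp add: mult_ac)
  have "0 \<le> 1/\<delta> * (\<beta> s * pos_part_fun g (x s))" "0 \<le> L/c * (\<alpha> s * d\<^sup>2)"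
    using \<delta> c order_trans[OF norm_ge_zero L] \<alpha>_nonneg[OF s] \<beta>_nonneg[OF s] pos_part_nonneg
    by simp_all
  then show ?thesis
    using norm_velocity_le[OF s] dist_part subgrad_part
    unfolding dissipation_def d_def by (simp add: algebra_simps)
qed

lemma crossing_dissipation_lower_bound:
  assumes \<delta>: "0 < \<delta>" and c: "0 < c" and L: "\<And>t. 0 \<le> t \<Longrightarrow> norm (G (x t)) \<le> L"
    and ab: "0 \<le> a" "a \<le> b"
    and feasible_near: "\<And>t. a \<le> t \<Longrightarrow> t \<le> b \<Longrightarrow> infdist (x t) X \<le> 2 * \<delta> \<Longrightarrow>
      c \<le> pos_part_fun g (x t)"
    and start: "infdist (x a) X \<le> \<delta>" and stop: "2 * \<delta> \<le> infdist (x b) X"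
  shows "\<delta> \<le> (1/\<delta> + L/c) * integral {a..b} dissipation"
proof -
  define K where "K = 1/\<delta> + L/c"
  have "0 \<le> L" using L[of 0] norm_ge_zero order_trans by blast
  then have "0 \<le> K" using \<delta> c by (simp add: K_def)
  have "continuous_on {a..b} (\<lambda>t. infdist (x t) X)"
    using continuous_on_trajectory[OF ab] by (intro continuous_intros)
  then obtain a' b' where crossing: "a \<le> a'" "a' \<le> b'" "b' \<le> b"
      "infdist (x a') X = \<delta>" "infdist (x b') X = 2 * \<delta>"
      "\<And>t. a' \<le> t \<Longrightarrow> t \<le> b' \<Longrightarrow> \<delta> \<le> infdist (x t) X \<and> infdist (x t) X \<le> 2 * \<delta>"
    using continuous_crossing_interval[OF ab(2) _ start _ stop] \<delta> by auto
  have a'0: "0 \<le> a'" using ab crossing by linarith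
  have "\<delta> \<le> dist (x b') (x a')"
    using infdist_triangle_abs[of "x b'" X "x a'"] crossing by simp
  also have "\<dots> \<le> integral {a'..b'} (\<lambda>s. norm (velocity s))"
    by (rule dist_trajectory_le[OF a'0 crossing(2)])
  also have "\<dots> \<le> integral {a'..b'} (\<lambda>s. K * dissipation s)"
  proof (rule integral_le)
    show "(\<lambda>s. norm (velocity s)) integrable_on {a'..b'}"
      by (rule norm_velocity_integrable[OF a'0 crossing(2)])
    show "(\<lambda>s. K * dissipation s) integrable_on {a'..b'}"
      using dissipation_integrable[OF a'0 crossing(2)] by (rule integrable_on_mult_right)
    fix s assume "s \<in> {a'..b'}"
    then show "norm (velocity s) \<le> K * dissipation s"
      unfolding K_def using crossing a'0 ab
      by (intro norm_velocity_le_dissipation \<delta> c L feasible_near) auto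
  qed
  also have "\<dots> \<le> K * integral {a..b} dissipation"
    using integral_subset_le[of "{a'..b'}" "{a..b}" dissipation] crossing ab \<open>0 \<le> K\<close>
      dissipation_integrable[OF a'0 crossing(2)] dissipation_integrable[OF ab] dissipation_nonneg
    by (auto intro!: mult_left_mono)
  finally show ?thesis by (simp add: K_def)
qed

lemma not_eventually_far_from_constraint_set:
  assumes "0 < \<delta>" "0 \<le> T" and far: "\<And>t. T \<le> t \<Longrightarrow> \<delta> \<le> infdist (x t) X"
  shows False
proof -
  have "\<delta>\<^sup>2 * \<alpha> s \<le> dissipation s" if "T \<le> s" for s
  proof -
    have s: "0 \<le> s" using that \<open>0 \<le> T\<close> by linarith
    have "\<delta>\<^sup>2 \<le> (infdist (x s) X)\<^sup>2" using far[OF that] \<open>0 < \<delta>\<close> by (intro power_mono) auto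
    then have "\<alpha> s * \<delta>\<^sup>2 \<le> \<alpha> s * (infdist (x s) X)\<^sup>2"
      by (rule mult_left_mono) (rule \<alpha>_nonneg[OF s])
    moreover have "0 \<le> \<beta> s * pos_part_fun g (x s)" using \<beta>_nonneg[OF s] pos_part_nonneg by simp
    ultimately show ?thesis unfolding dissipation_def by (simp add: mult.commute)
  qed
  moreover have "0 < \<delta>\<^sup>2" using \<open>0 < \<delta>\<close> by simp
  ultimately show False using no_diverging_minorant[OF \<alpha>_div \<alpha>_loc_int _ \<open>0 \<le> T\<close>] by blast
qed

lemma not_eventually_infeasible:
  assumes "0 < c" "0 \<le> T" and infeasible: "\<And>t. T \<le> t \<Longrightarrow> c \<le> pos_part_fun g (x t)"
  shows False
proof -
  have "c * \<beta> s \<le> dissipation s" if "T \<le> s" for s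
  proof -
    have s: "0 \<le> s" using that \<open>0 \<le> T\<close> by linarith
    have "\<beta> s * c \<le> \<beta> s * pos_part_fun g (x s)"
      using infeasible[OF that] by (rule mult_left_mono) (rule \<beta>_nonneg[OF s])
    moreover have "0 \<le> \<alpha> s * (infdist (x s) X)\<^sup>2" using \<alpha>_nonneg[OF s] by simp
    ultimately show ?thesis unfolding dissipation_def by (simp add: mult.commute)
  qed
  then show False using no_diverging_minorant[OF \<beta>_div \<beta>_loc_int \<open>0 < c\<close> \<open>0 \<le> T\<close>] by blast
qed

lemma exists_late_time_near_solution_set:
  assumes "0 < \<delta>" "0 < c"
  shows "\<exists>t\<ge>T. infdist (x t) X < \<delta> \<and> pos_part_fun g (x t) < c"
proof (rule ccontr)
  assume "\<not> ?thesis"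
  then have feasible_near: "c \<le> pos_part_fun g (x t)" if "T \<le> t" "infdist (x t) X < \<delta>" for t
    using that by force
  define \<delta>' where "\<delta>' = \<delta> / 3"
  have "0 < \<delta>'" using \<open>0 < \<delta>\<close> by (simp add: \<delta>'_def)
  obtain L where L: "\<And>t. 0 \<le> t \<Longrightarrow> norm (G (x t)) \<le> L"
    using subgradient_bounded_along_trajectory by blast
  define K where "K = 1/\<delta>' + L/c"
  have "0 < K"
    using \<open>0 < \<delta>'\<close> \<open>0 < c\<close> order_trans[OF norm_ge_zero L[of 0]] by (simp add: K_def add_pos_nonneg)
  obtain T0 where T0: "0 \<le> T0" "\<And>a b. T0 \<le> a \<Longrightarrow> a \<le> b \<Longrightarrow> integral {a..b} dissipation < \<delta>' / K"
    using dissipation_tail_small[of "\<delta>' / K"] \<open>0 < \<delta>'\<close> \<open>0 < K\<close> by auto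
  define T' where "T' = max T T0"
  have T': "0 \<le> T'" "T \<le> T'" "T0 \<le> T'" using T0 by (auto simp: T'_def)
  obtain a where a: "T' \<le> a" "infdist (x a) X \<le> \<delta>'"
    using not_eventually_far_from_constraint_set[OF \<open>0 < \<delta>'\<close> T'(1)] by force
  have feasible_band: "c \<le> pos_part_fun g (x t)" if "a \<le> t" "infdist (x t) X \<le> 2 * \<delta>'" for t
    using feasible_near that a T' \<open>0 < \<delta>'\<close> unfolding \<delta>'_def by simp
  obtain b where b: "a \<le> b" "2 * \<delta>' \<le> infdist (x b) X"
    using not_eventually_infeasible[OF \<open>0 < c\<close>, of a] feasible_band a T' by force
  txt \<open>The excursion from distance \<open>\<delta>'\<close> to \<open>2\<delta>'\<close> stays where \<open>g\<^sup>+ \<ge> c\<close>, so it costs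
    a fixed amount of dissipation, more than the tail beyond \<open>T0\<close> has left.\<close>
  have "\<delta>' \<le> K * integral {a..b} dissipation"
    unfolding K_def using a T'
    by (intro crossing_dissipation_lower_bound[OF \<open>0 < \<delta>'\<close> \<open>0 < c\<close> L _ b(1) feasible_band a(2) b(2)]) auto
  moreover have "K * integral {a..b} dissipation < \<delta>'"
    using T0(2)[of a b] a b T' \<open>0 < K\<close> by (simp add: field_simps)
  ultimately show False by simp
qed

lemma trajectory_converges: "\<exists>p \<in> {y \<in> X. g y \<le> 0}. (x \<longlongrightarrow> p) at_top"
proof -
  have "\<forall>n. \<exists>t\<ge>real n. infdist (x t) X < inverse (Suc n) \<and> pos_part_fun g (x t) < inverse (Suc n)"
    using exists_late_time_near_solution_set by simp
  then obtain \<tau> where "\<forall>n. real n \<le> \<tau> n \<and>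
      infdist (x (\<tau> n)) X < inverse (Suc n) \<and> pos_part_fun g (x (\<tau> n)) < inverse (Suc n)"
    by (auto dest: choice)
  then have \<tau>: "\<And>n. real n \<le> \<tau> n"
      "\<And>n. infdist (x (\<tau> n)) X < inverse (Suc n)" "\<And>n. pos_part_fun g (x (\<tau> n)) < inverse (Suc n)"
    by auto
  have \<tau>_nonneg: "0 \<le> \<tau> n" for n using \<tau>(1)[of n] by linarith
  then have "range (\<lambda>n. x (\<tau> n)) \<subseteq> x ` {0..}" by auto
  then have "bounded (range (\<lambda>n. x (\<tau> n)))" using trajectory_bounded bounded_subset by blast
  then obtain p r where "strict_mono r" and p: "((\<lambda>n. x (\<tau> n)) \<circ> r) \<longlonglongrightarrow> p"
    using bounded_imp_convergent_subsequence by metis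
  have vanishes_at_p: "\<phi> p = 0"
    if "continuous_on UNIV \<phi>" "\<And>y. 0 \<le> \<phi> y" "\<And>n. \<phi> (x (\<tau> n)) < inverse (Suc n)" for \<phi> :: "'a \<Rightarrow> real"
  proof -
    have "(\<lambda>n. \<phi> (x (\<tau> n))) \<longlonglongrightarrow> 0"
    proof (rule tendsto_sandwich[OF _ _ tendsto_const LIMSEQ_inverse_real_of_nat])
      show "\<forall>\<^sub>F n in sequentially. 0 \<le> \<phi> (x (\<tau> n))" using that(2) by simp
      show "\<forall>\<^sub>F n in sequentially. \<phi> (x (\<tau> n)) \<le> inverse (Suc n)"
        using that(3) by (simp add: less_imp_le)
    qed
    then have "(\<lambda>n. \<phi> (x (\<tau> (r n)))) \<longlonglongrightarrow> 0"
      using LIMSEQ_subseq_LIMSEQ[OF _ \<open>strict_mono r\<close>] by (simp add: o_def)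
    moreover have "isCont \<phi> p" using that(1) by (simp add: continuous_on_eq_continuous_at)
    then have "(\<lambda>n. \<phi> (x (\<tau> (r n)))) \<longlonglongrightarrow> \<phi> p"
      using isCont_tendsto_compose[OF _ p] by (simp add: o_def)
    ultimately show ?thesis using LIMSEQ_unique by blast
  qed
  have "infdist p X = 0"
    using vanishes_at_p[of "\<lambda>y. infdist y X"] \<tau>(2) by (simp add: continuous_on_infdist infdist_nonneg)
  then have "p \<in> X" using in_closed_iff_infdist_zero[OF X_closed X_nonempty] by simp
  moreover have "g p \<le> 0"
    using vanishes_at_p[OF continuous_pos_part pos_part_nonneg \<tau>(3)] by (simp add: pos_part_fun_def)
  moreover have "(x \<longlongrightarrow> p) at_top"
  proof (rule tendsto_of_antimono_dist)
    show "dist (x t) p \<le> dist (x s) p" if "0 \<le> s" "s \<le> t" for s t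
      using dist_solution_antimono[OF \<open>p \<in> X\<close> \<open>g p \<le> 0\<close> that] .
    show "0 \<le> \<tau> (r n)" for n by (rule \<tau>_nonneg)
    show "(\<lambda>n. x (\<tau> (r n))) \<longlonglongrightarrow> p" using p by (simp add: o_def)
  qed
  ultimately show ?thesis by blast
qed

end

theorem theorem1:
  fixes g :: "'a::euclidean_space \<Rightarrow> real"
    and X :: "'a set"
    and \<alpha> \<beta> :: "real \<Rightarrow> real"
    and G :: "'a \<Rightarrow> 'a"
    and x :: "real \<Rightarrow> 'a"
  assumes g_cont: "continuous_on UNIV g"
    and g_convex: "convex_on UNIV g"
    and X_closed: "closed X"
    and X_convex: "convex X"
    and sol_nonempty: "{y \<in> X. g y \<le> 0} \<noteq> {}"
    and G_subgrad: "\<And>y. is_subgradient (pos_part_fun g) y (G y)"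
    and \<alpha>_nonneg: "\<And>t. t \<ge> 0 \<Longrightarrow> \<alpha> t \<ge> 0"
    and \<beta>_nonneg: "\<And>t. t \<ge> 0 \<Longrightarrow> \<beta> t \<ge> 0"
    and \<alpha>_loc_int: "\<And>T. T \<ge> 0 \<Longrightarrow> \<alpha> integrable_on {0..T}"
    and \<beta>_loc_int: "\<And>T. T \<ge> 0 \<Longrightarrow> \<beta> integrable_on {0..T}"
    and \<alpha>_div: "filterlim (\<lambda>T. integral {0..T} \<alpha>) at_top at_top"
    and \<beta>_div: "filterlim (\<lambda>T. integral {0..T} \<beta>) at_top at_top"
    and x_sol: "\<And>t. t \<ge> 0 \<Longrightarrow>
        (\<lambda>s. - (\<alpha> s *\<^sub>R (x s - closest_point X (x s))) - \<beta> s *\<^sub>R G (x s))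
          absolutely_integrable_on {0..t} \<and>
        ((\<lambda>s. - (\<alpha> s *\<^sub>R (x s - closest_point X (x s))) - \<beta> s *\<^sub>R G (x s))
          has_integral (x t - x 0)) {0..t}"
  shows "\<exists>xs \<in> {y \<in> X. g y \<le> 0}. (x \<longlongrightarrow> xs) at_top"
proof -
  \<comment> \<open>Convexity of \<open>g\<close> is used only through the subgradient hypothesis on \<open>G\<close>.\<close>
  interpret projected_subgradient_flow g X \<alpha> \<beta> G x
    using g_cont X_closed X_convex sol_nonempty G_subgrad \<alpha>_nonneg \<beta>_nonneg \<alpha>_loc_int \<beta>_loc_int
      \<alpha>_div \<beta>_div x_sol
    by unfold_locales
  show ?thesis by (rule trajectory_converges)
qed

end
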